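(* Let $p$ be an odd prime, $R=F_p+vF_p$ with $v^2=v$, let $\vartheta=1-2v$ or $\vartheta=-1+2v$, and let $C$ be a $\vartheta$-constacyclic code of length $n$ over $R$ with generating set in standard form $\{vg_{1-v}(x),(1-v)g_v(x)\}$. Then $\phi_\vartheta(C)=[g_{1-v}(x)g_v(x)]$, the cyclic code of length $2n$ over $F_p$ (ideal of $F_p[x]/\langle x^{2n}-1\rangle$) generated by $g_{1-v}(x)g_v(x)$.
   Context: Write $\vartheta=\lambda+v\mu$ with $\lambda,\mu\in F_p$. A $\vartheta$-constacyclic code of length $n$ over $R$ is an $R$-submodule of $R^n$ closed under $(c_0,\dots,c_{n-1})\mapsto(\vartheta c_{n-1},c_0,\dots,c_{n-2})$, identified with an ideal of $R_n=R[x]/\langle x^n-\vartheta\rangle$ via $(c_i)\mapsto\sum c_ix^i$. A set $\{vg_1(x),(1-v)g_2(x)\}$ is a generating set in standard form for $C$ if it generates $C$ as an ideal, each $g_i\in F_p[x]$ is monic or $0$, $g_1\mid x^n-(\lambda+\mu)$ if $g_1\ne0$, and $g_2\mid x^n-\lambda$ if $g_2\neq0$. The Gray map $\phi_\vartheta:R_n\to F_p[x]/\langle x^{2n}-1\rangle$ sends $f(x)=r(x)+vq(x)$ ($r,q\in F_p[x]$ of degree $<n$) to $\lambda(\lambda+\mu)q(x)+x^n[-\mu r(x)-(\lambda+\mu)q(x)]$. For a monic divisor $g$ of $x^{2n}-1$, $[g(x)]$ is the ideal of $F_p[x]/\langle x^{2n}-1\rangle$ generated by $g$. *)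

theory Defs
  imports "HOL-Computational_Algebra.Polynomial" "HOL-Computational_Algebra.Primes"
begin

text \<open>Elements of R[x], R = F_p + v F_p with v^2 = v, are represented as pairs (A, B)
  of polynomials over F_p, standing for A(x) + v B(x).\<close>

type_synonym 'a vpoly = "'a poly \<times> 'a poly"

definition vadd :: "'a::comm_ring_1 vpoly \<Rightarrow> 'a vpoly \<Rightarrow> 'a vpoly" where
  "vadd f g = (fst f + fst g, snd f + snd g)"

text \<open>(A1 + v B1)(A2 + v B2) = A1 A2 + v (A1 B2 + B1 A2 + B1 B2), using v^2 = v.\<close>
definition vmul :: "'a::comm_ring_1 vpoly \<Rightarrow> 'a vpoly \<Rightarrow> 'a vpoly" where
  "vmul f g = (fst f * fst g, fst f * snd g + snd f * fst g + snd f * snd g)"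

text \<open>x^n - theta with theta = lam + v mu, as an element of R[x].\<close>
definition xn_minus_theta :: "nat \<Rightarrow> 'a::comm_ring_1 \<Rightarrow> 'a \<Rightarrow> 'a vpoly" where
  "xn_minus_theta n lam mu = (monom 1 n - [:lam:], - [:mu:])"

text \<open>The ideal of R_n = R[x]/<x^n - theta> generated by {v g1, (1-v) g2}, each residue
  class represented by its unique representative r + v q with deg r, deg q < n.\<close>
definition Rn_ideal_std :: "nat \<Rightarrow> 'a::comm_ring_1 \<Rightarrow> 'a \<Rightarrow> 'a poly \<Rightarrow> 'a poly \<Rightarrow> 'a vpoly set" where
  "Rn_ideal_std n lam mu g1 g2 =
     {(r, q). degree r < n \<and> degree q < n \<and>
        (\<exists>a b c. (r, q) = vadd (vadd (vmul a (0, g1)) (vmul b (g2, - g2)))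
                                  (vmul c (xn_minus_theta n lam mu)))}"

definition gray :: "nat \<Rightarrow> 'a::comm_ring_1 \<Rightarrow> 'a \<Rightarrow> 'a vpoly \<Rightarrow> 'a poly" where
  "gray n lam mu f = smult (lam * (lam + mu)) (snd f)
      + monom 1 n * (smult (- mu) (fst f) - smult (lam + mu) (snd f))"

definition cyclic_ideal :: "nat \<Rightarrow> 'a::field poly \<Rightarrow> 'a poly set" where
  "cyclic_ideal N g = {(g * a) mod (monom 1 N - 1) | a. True}"

end

(*
  Writing an element of R[x] as r + v q, the substitutions v := 0 and v := 1 split R into
  F_p x F_p, and the code C consists of the r + v q with deg r, deg q < n such that g2 = g_v
  divides r and g1 = g_(1-v) divides r + q. For theta = lam (1 - 2v) with lam^2 = 1 the Gray map
  factors as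
    phi(r + v q) = lam ((r + q)(x^n - lam) + r (x^n + lam)),
  so phi(C) consists of multiples of g1 g2 of degree < 2n. Conversely, since 2 is invertible
  and x^(2n) - 1 = (x^n + lam)(x^n - lam), every such multiple h is phi(r + v q) for the
  Chinese-remainder data  r = (h mod (x^n - lam))/2  and  r + q = -(h mod (x^n + lam))/2,
  which inherit the required divisibilities from h.
*)
theory Submission
  imports Defs "HOL-Library.Disjoint_Sets" "HOL-Library.Z2"
begin

(* If 2 = 0, then x \<mapsto> x + 1 is a fixed-point-free involution, so the ring has even size. *)
lemma two_neq_zero_if_odd_card:
  assumes "odd (card (UNIV :: 'a::ring_1 set))"
  shows "(2::'a) \<noteq> 0"
proof
  assume "(2::'a) = 0"
  then have "x + 1 + 1 = x" for x :: 'a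
    by (simp add: add.assoc one_add_one)
  then have "(\<Sum>x\<in>(UNIV :: 'a set). 1 :: bit) = 0"
    by (intro sum_involution_eq_0[where h = "\<lambda>x. x + 1"]) simp_all
  then have "even (card (UNIV :: 'a set))"
    using even_of_nat_iff[where ?'a = bit] by simp
  with assms show False by simp
qed

(* The parameters (lam, -2 lam) with lam^2 = 1 are the two cases theta = 1 - 2v and theta = -1 + 2v. *)
lemma gray_crt_form:
  fixes lam :: "'a::comm_ring_1"
  assumes "lam * lam = 1"
  shows "gray n lam (- 2 * lam) (r, q) =
    smult lam ((r + q) * (monom 1 n - [:lam:]) + r * (monom 1 n + [:lam:]))"
proof -
  define X :: "'a poly" where "X = monom 1 n"
  define L where "L = [:lam:]"
  have LL: "L * L = 1"
    unfolding L_def using assms by (simp add: one_pCons)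
  have "gray n lam (- 2 * lam) (r, q) = X * ((L + L) * r + L * q) - q"
    unfolding gray_def X_def L_def using assms by (simp add: algebra_simps smult_add_left)
  also have "\<dots> = L * ((r + q) * (X - L) + r * (X + L)) + (L * L - 1) * q"
    by (simp add: algebra_simps)
  also have "\<dots> = L * ((r + q) * (X - L) + r * (X + L))"
    by (simp add: LL)
  finally show ?thesis
    unfolding X_def L_def by simp
qed

lemma degree_gray_less:
  fixes r q :: "'a::comm_ring_1 poly"
  assumes "degree r < n" "degree q < n"
  shows "degree (gray n lam mu (r, q)) < 2 * n"
proof -
  define s where "s = smult (- mu) r - smult (lam + mu) q"
  have "degree s < n"
    unfolding s_def using assms
    by (intro degree_diff_less le_less_trans[OF degree_smult_le])
  then have "degree (monom 1 n * s) < 2 * n"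
    using degree_mult_le[of "monom 1 n" s] degree_monom_le[of "1::'a" n] by linarith
  moreover have "degree (smult (lam * (lam + mu)) q) < 2 * n"
    using degree_smult_le[of "lam * (lam + mu)" q] assms(2) by linarith
  ultimately show ?thesis
    unfolding gray_def s_def by (simp add: degree_add_less)
qed

lemma Rn_ideal_std_iff:
  assumes g1: "g1 dvd monom 1 n - [:lam + mu:]" and g2: "g2 dvd monom 1 n - [:lam:]"
  shows "(r, q) \<in> Rn_ideal_std n lam mu g1 g2 \<longleftrightarrow>
    degree r < n \<and> degree q < n \<and> g2 dvd r \<and> g1 dvd r + q"
proof
  assume "(r, q) \<in> Rn_ideal_std n lam mu g1 g2"
  then obtain a b c where deg: "degree r < n" "degree q < n"
    and rq: "(r, q) = vadd (vadd (vmul a (0, g1)) (vmul b (g2, - g2)))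
                           (vmul c (xn_minus_theta n lam mu))"
    unfolding Rn_ideal_std_def by blast
  have r: "r = fst b * g2 + fst c * (monom 1 n - [:lam:])"
    and q: "q = (fst a + snd a) * g1 - fst b * g2 - fst c * [:mu:]
                + snd c * (monom 1 n - [:lam:]) - snd c * [:mu:]"
    using rq unfolding vadd_def vmul_def xn_minus_theta_def by (auto simp: algebra_simps)
  have "r + q = (fst a + snd a) * g1 + (fst c + snd c) * (monom 1 n - [:lam + mu:])"
    unfolding r q by (simp add: algebra_simps smult_add_left smult_add_right)
  with r show "degree r < n \<and> degree q < n \<and> g2 dvd r \<and> g1 dvd r + q"
    using deg g1 g2 by simp
next
  assume "degree r < n \<and> degree q < n \<and> g2 dvd r \<and> g1 dvd r + q"
  then obtain s t where deg: "degree r < n" "degree q < n" and "r + q = g1 * s" "r = g2 * t"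
    by (auto elim!: dvdE)
  then have "(r, q) = vadd (vadd (vmul (s, 0) (0, g1)) (vmul (t, 0) (g2, - g2)))
                           (vmul (0, 0) (xn_minus_theta n lam mu))"
    unfolding vadd_def vmul_def by (simp add: algebra_simps eq_diff_eq flip: add_diff_eq)
  with deg show "(r, q) \<in> Rn_ideal_std n lam mu g1 g2"
    unfolding Rn_ideal_std_def by blast
qed

lemma degree_monom_one_add:
  fixes c :: "'a::comm_ring_1 poly"
  assumes "degree c < n"
  shows "degree (monom 1 n + c) = n"
  using assms by (simp add: degree_add_eq_left degree_monom_eq)

lemma degree_mod_monom_one_add_less:
  fixes h c :: "'a::field poly"
  assumes "degree c < n"
  shows "degree (h mod (monom 1 n + c)) < n"
proof -
  have "degree (monom 1 n + c) = n"
    using assms by (rule degree_monom_one_add)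
  moreover from this have "monom 1 n + c \<noteq> 0"
    using assms by auto
  ultimately show ?thesis
    using degree_mod_less[of "monom 1 n + c" h] assms by auto
qed

lemma cyclic_ideal_eq_multiples:
  fixes g :: "'a::field poly"
  assumes "N > 0" and g: "g dvd monom 1 N - 1"
  shows "cyclic_ideal N g = {h. degree h < N \<and> g dvd h}"
proof -
  have degM: "degree (monom 1 N - 1 :: 'a poly) = N"
    using degree_monom_one_add[of "- 1" N] \<open>N > 0\<close> by simp
  then have "monom 1 N - 1 \<noteq> (0 :: 'a poly)"
    using \<open>N > 0\<close> by auto
  show ?thesis
  proof (intro set_eqI iffI)
    fix h assume "h \<in> cyclic_ideal N g"
    then obtain a where h: "h = (g * a) mod (monom 1 N - 1)"
      unfolding cyclic_ideal_def by blast
    have "degree h < N"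
      using degree_mod_less[of "monom 1 N - 1" "g * a"] degM \<open>N > 0\<close> \<open>monom 1 N - 1 \<noteq> 0\<close>
      unfolding h by auto
    moreover have "g dvd h"
      unfolding h using g by (simp add: dvd_mod)
    ultimately show "h \<in> {h. degree h < N \<and> g dvd h}"
      by simp
  next
    fix h assume "h \<in> {h. degree h < N \<and> g dvd h}"
    then obtain a where "degree h < N" "h = g * a"
      by (auto elim: dvdE)
    then have "h = (g * a) mod (monom 1 N - 1)"
      by (simp add: mod_poly_less degM)
    then show "h \<in> cyclic_ideal N g"
      unfolding cyclic_ideal_def by blast
  qed
qed

lemma monom_plus_mult_monom_minus:
  fixes lam :: "'a::comm_ring_1"
  assumes "lam * lam = 1"
  shows "(monom 1 n + [:lam:]) * (monom 1 n - [:lam:]) = monom 1 (2 * n) - 1"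
proof -
  have "[:lam:] * [:lam:] = 1"
    using assms by (simp add: one_pCons)
  moreover have "monom 1 (2 * n) = monom 1 n * monom (1::'a) n"
    by (simp add: mult_monom mult_2)
  ultimately show ?thesis
    by (simp add: algebra_simps)
qed

lemma eq_if_dvd_diff_degree_less:
  fixes f g m :: "'a::idom poly"
  assumes "m dvd f - g" "degree f < degree m" "degree g < degree m"
  shows "f = g"
proof (rule ccontr)
  assume "f \<noteq> g"
  then have "degree m \<le> degree (f - g)"
    using assms(1) by (intro dvd_imp_degree_le) simp_all
  also have "\<dots> < degree m"
    using degree_diff_le_max[of f g] assms(2,3) by linarith
  finally show False
    by simp
qed

lemma gray_crt_preimage:
  fixes lam :: "'a::field" and h :: "'a poly"
  assumes lam: "lam * lam = 1" and two: "(2::'a) \<noteq> 0" and deg: "degree h < 2 * n"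
  defines "P \<equiv> monom 1 n + [:lam:]" and "Q \<equiv> monom 1 n - [:lam:]"
  shows "gray n lam (- 2 * lam)
           (smult (inverse 2) (h mod Q), - smult (inverse 2) (h mod P + h mod Q)) = h"
    (is "?G = h")
proof -
  have "n > 0"
    using deg by simp
  have "degree (h mod P) < n" "degree (h mod Q) < n"
    unfolding P_def Q_def diff_conv_add_uminus using \<open>n > 0\<close>
    by (simp_all add: degree_mod_monom_one_add_less)
  then have degG: "degree ?G < 2 * n"
    by (intro degree_gray_less le_less_trans[OF degree_smult_le]) (simp_all add: degree_add_less)
  have "smult (inverse 2) (h mod Q) + - smult (inverse 2) (h mod P + h mod Q)
        = - smult (inverse 2) (h mod P)"
    by (simp add: smult_add_right)
  then have "?G = smult lam (- smult (inverse 2) (h mod P) * Q + smult (inverse 2) (h mod Q) * P)"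
    unfolding gray_crt_form[OF lam] P_def Q_def by simp
  also have "\<dots> = smult (lam * inverse 2) ((h mod Q) * P - (h mod P) * Q)"
    by (simp add: smult_diff_right)
  also have "(h mod Q) * P - (h mod P) * Q = h * (P - Q) + (h div P - h div Q) * (P * Q)"
    by (simp add: algebra_simps flip: minus_div_mult_eq_mod)
  also have "P - Q = [:lam:] + [:lam:]"
    unfolding P_def Q_def by simp
  also have "P * Q = monom 1 (2 * n) - 1"
    unfolding P_def Q_def using lam by (rule monom_plus_mult_monom_minus)
  finally have "?G - h = smult (lam * inverse 2) ((h div P - h div Q) * (monom 1 (2 * n) - 1))"
    using lam two by (simp add: smult_add_right)
  then have "monom 1 (2 * n) - 1 dvd ?G - h"
    by (simp add: dvd_smult)
  have degM: "degree (monom 1 (2 * n) - 1 :: 'a poly) = 2 * n"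
    using degree_monom_one_add[of "- 1" "2 * n"] \<open>n > 0\<close> by simp
  from \<open>monom 1 (2 * n) - 1 dvd ?G - h\<close> show ?thesis
    by (rule eq_if_dvd_diff_degree_less) (simp_all only: degM degG deg)
qed

lemma gray_image_Rn_ideal_std:
  fixes lam mu :: "'a::field" and g1 g2 :: "'a poly"
  assumes lam: "lam * lam = 1" and mu: "mu = - 2 * lam" and two: "(2::'a) \<noteq> 0" and "n > 0"
    and g1: "g1 dvd monom 1 n - [:lam + mu:]" and g2: "g2 dvd monom 1 n - [:lam:]"
  shows "gray n lam mu ` Rn_ideal_std n lam mu g1 g2 = cyclic_ideal (2 * n) (g1 * g2)"
proof -
  note mem_ideal = Rn_ideal_std_iff[OF g1 g2]
  have "monom 1 n - [:lam + mu:] = monom 1 n + [:lam:]"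
    unfolding mu by (simp add: poly_eq_iff coeff_pCons split: nat.split)
  with g1 have g1': "g1 dvd monom 1 n + [:lam:]"
    by simp
  have "g1 * g2 dvd monom 1 (2 * n) - 1"
    using mult_dvd_mono[OF g1' g2] monom_plus_mult_monom_minus[OF lam] by simp
  with \<open>n > 0\<close> have cyclic: "cyclic_ideal (2 * n) (g1 * g2) = {h. degree h < 2 * n \<and> g1 * g2 dvd h}"
    by (intro cyclic_ideal_eq_multiples) simp_all
  show ?thesis
    unfolding cyclic
  proof (intro set_eqI iffI)
    fix h assume "h \<in> gray n lam mu ` Rn_ideal_std n lam mu g1 g2"
    then obtain r q where h: "h = gray n lam mu (r, q)"
      and "degree r < n" "degree q < n" "g2 dvd r" "g1 dvd r + q"
      using mem_ideal by auto
    have "g1 * g2 dvd (r + q) * (monom 1 n - [:lam:]) + r * (monom 1 n + [:lam:])"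
      using mult_dvd_mono[OF \<open>g1 dvd r + q\<close> g2] mult_dvd_mono[OF g1' \<open>g2 dvd r\<close>]
      by (simp add: mult.commute)
    then have "g1 * g2 dvd h"
      unfolding h mu gray_crt_form[OF lam] by (rule dvd_smult)
    moreover have "degree h < 2 * n"
      unfolding h using \<open>degree r < n\<close> \<open>degree q < n\<close> by (rule degree_gray_less)
    ultimately show "h \<in> {h. degree h < 2 * n \<and> g1 * g2 dvd h}"
      by simp
  next
    fix h assume "h \<in> {h. degree h < 2 * n \<and> g1 * g2 dvd h}"
    then have deg: "degree h < 2 * n" and "g1 * g2 dvd h"
      by simp_all
    define P where "P = monom 1 n + [:lam:]"
    define Q where "Q = monom 1 n - [:lam:]"
    define r where "r = smult (inverse 2) (h mod Q)"
    define q where "q = - smult (inverse 2) (h mod P + h mod Q)"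
    have "degree (h mod P) < n" "degree (h mod Q) < n"
      unfolding P_def Q_def diff_conv_add_uminus using \<open>n > 0\<close>
      by (simp_all add: degree_mod_monom_one_add_less)
    then have "degree r < n" "degree q < n"
      unfolding r_def q_def by (simp_all add: degree_add_less)
    moreover have "g2 dvd r"
      unfolding r_def Q_def using \<open>g1 * g2 dvd h\<close> g2
      by (intro dvd_smult dvd_mod) (auto dest: dvd_mult_right)
    moreover have "r + q = - smult (inverse 2) (h mod P)"
      unfolding r_def q_def by (simp add: smult_add_right)
    then have "g1 dvd r + q"
      unfolding P_def using \<open>g1 * g2 dvd h\<close> g1'
      by (auto intro: dvd_smult dvd_mod dest: dvd_mult_left)
    ultimately have "(r, q) \<in> Rn_ideal_std n lam mu g1 g2"
      using mem_ideal by simp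
    moreover have "gray n lam mu (r, q) = h"
      unfolding mu r_def q_def P_def Q_def using lam two deg by (rule gray_crt_preimage)
    ultimately show "h \<in> gray n lam mu ` Rn_ideal_std n lam mu g1 g2"
      by force
  qed
qed

theorem corollary3p11:
  fixes p n :: nat and lam mu :: "'a::field" and g1 g2 :: "'a poly"
    and C :: "'a vpoly set"
  assumes "prime p" and "odd p" and "card (UNIV :: 'a set) = p"
    and "n > 0"
    and "(lam = 1 \<and> mu = -2) \<or> (lam = -1 \<and> mu = 2)"
    and "lead_coeff g1 = 1" and "g1 dvd (monom 1 n - [:lam + mu:])"
    and "lead_coeff g2 = 1" and "g2 dvd (monom 1 n - [:lam:])"
    and "C = Rn_ideal_std n lam mu g1 g2"
  shows "gray n lam mu ` C = cyclic_ideal (2 * n) (g1 * g2)"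
proof -
  have two: "(2::'a) \<noteq> 0"
    using assms(2,3) by (simp add: two_neq_zero_if_odd_card)
  from assms(5) have lam: "lam * lam = 1" and mu: "mu = - 2 * lam"
    by auto
  show ?thesis
    unfolding assms(10) using gray_image_Rn_ideal_std[OF lam mu two assms(4,7,9)] .
qed

end
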